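(* Let $d\ge2$, $\kappa,l>0$, $\lambda\in\mathbb R$, $k\in\{-1,0,1\}$ and $\mu\in\mathbb R$. On the open set of $(A,\phi)\in\mathbb R^2$ where the quantities under the square roots below are positive, define $$\pi_\phi(A,\phi)=\pm e^{dA}\sqrt{\frac{d(d-1)}{\kappa^2l^2}\mu e^{-(d+1)A}+k\Big(\frac{d-1}{2l}\Big)^2\phi^2e^{-2A}+\lambda\phi^{\frac{2(d+1)}{d-1}}},$$ $$\pi_A(A,\phi)=-\frac{d(d-1)}{\kappa^2l}e^{dA}\sqrt{1+ke^{-2A}+\mu e^{-(d+1)A}}+\frac{d-1}2\phi\,\pi_\phi(A,\phi).$$ Then (i) $\mathcal H(A,\phi,\pi_A(A,\phi),\pi_\phi(A,\phi))=0$ identically, where $$\mathcal H=\frac12\Big\{e^{-dA}\Big(\pi_\phi^2-\frac{\kappa^2}{d(d-1)}\big(\pi_A-\tfrac{d-1}2\phi\pi_\phi\big)^2\Big)+e^{dA}\Big(\frac{d(d-1)}{\kappa^2l^2}-\lambda\phi^{\frac{2(d+1)}{d-1}}+\frac{d(d-1)k}{\kappa^2l^2}e^{-2A}\big(1-\tfrac{(d-1)\kappa^2}{4d}\phi^2\big)\Big)\Big\};$$ (ii) $\partial\pi_A/\partial\phi=\partial\pi_\phi/\partial A$. Consequently, locally there is a function $\mathcal S(A,\phi)$ (depending on the arbitrary constant $\mu$) with $\pi_A=\partial_A\mathcal S$, $\pi_\phi=\partial_\phi\mathcal S$, which is a complete integral of the Hamilton–Jacobi equation $\mathcal H(A,\phi,\partial_A\mathcal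 S,\partial_\phi\mathcal S)=0$.
   Context: $\mathcal H$ is the radial Hamiltonian of the action $\int d^{d+1}x\sqrt g\big(-\frac{1}{2\kappa^2}(R+\frac{d(d-1)}{l^2})+\frac12(\partial\phi)^2+\frac{d-1}{8d}R\phi^2+\frac\lambda2\phi^{2(d+1)/(d-1)}\big)$ reduced to metrics $ds^2=dr^2+e^{2A(r)}g^{(0)}_{ij}dx^idx^j$ with $g^{(0)}$ of constant scalar curvature $kd(d-1)/l^2$ and $\phi=\phi(r)$; here $\pi_A$, $\pi_\phi$ are the momenta conjugate to $A$ and $\phi$. *)

theory Defs
  imports "HOL-Analysis.Analysis"
begin

text \<open>The power phi^(2(d+1)/(d-1)) for real phi, read as (phi^2)^((d+1)/(d-1)) = |phi|^(2(d+1)/(d-1)).\<close>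
definition phipow :: "nat \<Rightarrow> real \<Rightarrow> real" where
  "phipow d \<phi> = (\<phi>\<^sup>2) powr ((real d + 1) / (real d - 1))"

definition rad_phi :: "nat \<Rightarrow> real \<Rightarrow> real \<Rightarrow> real \<Rightarrow> real \<Rightarrow> real \<Rightarrow> real \<Rightarrow> real \<Rightarrow> real" where
  "rad_phi d \<kappa> l lam k \<mu> A \<phi> =
     real d * (real d - 1) / (\<kappa>\<^sup>2 * l\<^sup>2) * \<mu> * exp (- (real d + 1) * A)
     + k * ((real d - 1) / (2 * l))\<^sup>2 * \<phi>\<^sup>2 * exp (- 2 * A)
     + lam * phipow d \<phi>"

definition rad_A :: "nat \<Rightarrow> real \<Rightarrow> real \<Rightarrow> real \<Rightarrow> real" where
  "rad_A d k \<mu> A = 1 + k * exp (- 2 * A) + \<mu> * exp (- (real d + 1) * A)"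

definition dom_HJ :: "nat \<Rightarrow> real \<Rightarrow> real \<Rightarrow> real \<Rightarrow> real \<Rightarrow> real \<Rightarrow> (real \<times> real) set" where
  "dom_HJ d \<kappa> l lam k \<mu> = {(A, \<phi>). rad_phi d \<kappa> l lam k \<mu> A \<phi> > 0 \<and> rad_A d k \<mu> A > 0}"

text \<open>pi_phi, with sign s = +1 or -1 for the choice of branch.\<close>
definition pi_phi :: "real \<Rightarrow> nat \<Rightarrow> real \<Rightarrow> real \<Rightarrow> real \<Rightarrow> real \<Rightarrow> real \<Rightarrow> real \<Rightarrow> real \<Rightarrow> real" where
  "pi_phi s d \<kappa> l lam k \<mu> A \<phi> = s * exp (real d * A) * sqrt (rad_phi d \<kappa> l lam k \<mu> A \<phi>)"

definition pi_A :: "real \<Rightarrow> nat \<Rightarrow> real \<Rightarrow> real \<Rightarrow> real \<Rightarrow> real \<Rightarrow> real \<Rightarrow> real \<Rightarrow> real \<Rightarrow> real" where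
  "pi_A s d \<kappa> l lam k \<mu> A \<phi> =
     - (real d * (real d - 1) / (\<kappa>\<^sup>2 * l)) * exp (real d * A) * sqrt (rad_A d k \<mu> A)
     + (real d - 1) / 2 * \<phi> * pi_phi s d \<kappa> l lam k \<mu> A \<phi>"

definition Ham :: "nat \<Rightarrow> real \<Rightarrow> real \<Rightarrow> real \<Rightarrow> real \<Rightarrow> real \<Rightarrow> real \<Rightarrow> real \<Rightarrow> real \<Rightarrow> real" where
  "Ham d \<kappa> l lam k A \<phi> pA pP =
     1/2 * ( exp (- real d * A) * (pP\<^sup>2 - \<kappa>\<^sup>2 / (real d * (real d - 1)) * (pA - (real d - 1) / 2 * \<phi> * pP)\<^sup>2)
           + exp (real d * A) * ( real d * (real d - 1) / (\<kappa>\<^sup>2 * l\<^sup>2) - lam * phipow d \<phi>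
               + real d * (real d - 1) * k / (\<kappa>\<^sup>2 * l\<^sup>2) * exp (- 2 * A)
                 * (1 - (real d - 1) * \<kappa>\<^sup>2 / (4 * real d) * \<phi>\<^sup>2)))"

end

theory Submission
  imports Defs
begin

text \<open>
  Let R be the radicand of pi_phi. Because pi_phi = s e^(dA) sqrt R and
  pi_A - (d-1)/2 phi pi_phi is a constant times e^(dA) times the other square root,
  H = 0 becomes a polynomial identity in the two radicands. The integrability condition
  rests on the observation that each of the three terms of R is an eigenfunction of
  (d-1)/2 phi d/dphi - d/dA with eigenvalue d+1; for such R the phi-derivative of pi_A and
  the A-derivative of pi_phi agree. A potential is then built on a rectangle around each
  point of the open domain by integrating pi_A along the bottom edge and pi_phi
  vertically (differentiation under the integral sign plus the fundamental theorem of
  calculus).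
\<close>

lemma sq_times_sq_powr: "(y::real)\<^sup>2 * (y\<^sup>2) powr (e - 1) = (y\<^sup>2) powr e"
  by (simp add: powr_mult_base)

lemma has_real_derivative_sq_powr:
  fixes e y :: real
  assumes "e > 1"
  shows "((\<lambda>y. (y\<^sup>2) powr e) has_real_derivative 2 * e * y * (y\<^sup>2) powr (e - 1)) (at y)"
proof (cases "y = 0")
  case False
  then show ?thesis
    by (auto intro!: derivative_eq_intros simp: algebra_simps)
next
  case True
  \<comment> \<open>the chain rule fails at 0, where \<open>powr\<close> is not differentiable; use Caratheodory's criterion\<close>
  define g where "g z = z * (z\<^sup>2) powr (e - 1)" for z
  have "(z\<^sup>2) powr e - (y\<^sup>2) powr e = g z * (z - y)" for z
    using True sq_times_sq_powr[of z e] by (simp add: g_def power2_eq_square mult_ac)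
  moreover have "isCont g 0"
    unfolding g_def isCont_def using assms by (auto intro!: tendsto_eq_intros)
  ultimately show ?thesis
    using True unfolding CARAT_DERIV by (metis g_def mult_zero_left mult_zero_right)
qed

lemma Euler_eigenfunction_mixed_partials:
  fixes R :: "real \<Rightarrow> real \<Rightarrow> real" and c h n :: real
  assumes R_A: "((\<lambda>a. R a \<phi>) has_real_derivative R\<^sub>A) (at A)"
    and R_phi: "((\<lambda>p. R A p) has_real_derivative R\<^sub>\<phi>) (at \<phi>)"
    and pos: "R A \<phi> > 0"
    and Euler: "(n - 1) / 2 * \<phi> * R\<^sub>\<phi> - R\<^sub>A = (n + 1) * R A \<phi>"
  defines "D \<equiv> c * exp (n * A) * (n * sqrt (R A \<phi>) + R\<^sub>A / (2 * sqrt (R A \<phi>)))"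
  shows "((\<lambda>a. c * exp (n * a) * sqrt (R a \<phi>)) has_real_derivative D) (at A)"
    and "((\<lambda>p. h + (n - 1) / 2 * p * (c * exp (n * A) * sqrt (R A p))) has_real_derivative D) (at \<phi>)"
proof -
  show "((\<lambda>a. c * exp (n * a) * sqrt (R a \<phi>)) has_real_derivative D) (at A)"
    unfolding D_def using pos
    by (auto intro!: derivative_eq_intros R_A) (simp add: field_simps)
  have deriv: "((\<lambda>p. h + (n - 1) / 2 * p * (c * exp (n * A) * sqrt (R A p))) has_real_derivative
      (n - 1) / 2 * (c * exp (n * A) * sqrt (R A \<phi>)
        + \<phi> * (c * exp (n * A) * (R\<^sub>\<phi> / (2 * sqrt (R A \<phi>)))))) (at \<phi>)"
    using pos by (auto intro!: derivative_eq_intros R_phi) (simp add: field_simps)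
  have "(n - 1) / 2 * (c * exp (n * A) * sqrt (R A \<phi>)
          + \<phi> * (c * exp (n * A) * (R\<^sub>\<phi> / (2 * sqrt (R A \<phi>))))) = D"
  proof -
    define q where "q = sqrt (R A \<phi>)"
    have q: "q > 0" "R A \<phi> = q\<^sup>2" using pos by (auto simp: q_def)
    have "(n - 1) / 2 * (c * exp (n * A) * q + \<phi> * (c * exp (n * A) * (R\<^sub>\<phi> / (2 * q))))
          = c * exp (n * A) * ((n - 1) / 2 * q + ((n - 1) / 2 * \<phi> * R\<^sub>\<phi>) / (2 * q))"
      using q by (simp add: field_simps)
    also have "\<dots> = c * exp (n * A) * (n * q + R\<^sub>A / (2 * q))"
      using Euler q by (simp add: field_simps power2_eq_square)
    finally show ?thesis unfolding D_def q_def .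
  qed
  with deriv show "((\<lambda>p. h + (n - 1) / 2 * p * (c * exp (n * A) * sqrt (R A p))) has_real_derivative D) (at \<phi>)"
    by (rule DERIV_cong)
qed

lemma continuous_on_slices:
  fixes f :: "real \<times> real \<Rightarrow> real"
  assumes "continuous_on (cbox (a0, p0) (a1, p1)) f"
  shows "p \<in> {p0..p1} \<Longrightarrow> continuous_on {a0..a1} (\<lambda>a. f (a, p))"
    and "a \<in> {a0..a1} \<Longrightarrow> continuous_on {p0..p1} (\<lambda>p. f (a, p))"
proof -
  show "continuous_on {a0..a1} (\<lambda>a. f (a, p))" if "p \<in> {p0..p1}"
    by (rule continuous_on_compose2[OF assms continuous_on_Pair[OF continuous_on_id continuous_on_const]])
      (use that in auto)
  show "continuous_on {p0..p1} (\<lambda>p. f (a, p))" if "a \<in> {a0..a1}"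
    by (rule continuous_on_compose2[OF assms continuous_on_Pair[OF continuous_on_const continuous_on_id]])
      (use that in auto)
qed

lemma has_real_derivative_integral_upper:
  fixes f :: "real \<Rightarrow> real"
  assumes "continuous_on {a..b} f" "a < x" "x < b"
  shows "((\<lambda>y. integral {a..y} f) has_real_derivative f x) (at x)"
proof -
  have "at x within {a..b} = at x"
    using assms(2,3) by (intro at_within_interior) auto
  then show ?thesis
    using integral_has_real_derivative[OF assms(1), of x] assms(2,3) by simp
qed

lemma Poincare_lemma_box:
  fixes P Q Q' :: "real \<Rightarrow> real \<Rightarrow> real"
  assumes cont: "continuous_on (cbox (a0, p0) (a1, p1)) (\<lambda>(a, p). P a p)"
      "continuous_on (cbox (a0, p0) (a1, p1)) (\<lambda>(a, p). Q a p)"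
      "continuous_on (cbox (a0, p0) (a1, p1)) (\<lambda>(a, p). Q' a p)"
    and Q_deriv: "\<And>a p. (a, p) \<in> cbox (a0, p0) (a1, p1) \<Longrightarrow>
                    ((\<lambda>x. Q x p) has_real_derivative Q' a p) (at a)"
    and P_deriv: "\<And>a p. (a, p) \<in> cbox (a0, p0) (a1, p1) \<Longrightarrow>
                    ((\<lambda>y. P a y) has_real_derivative Q' a p) (at p)"
  obtains S where "\<And>a p. (a, p) \<in> box (a0, p0) (a1, p1) \<Longrightarrow>
      ((\<lambda>x. S x p) has_real_derivative P a p) (at a) \<and> ((\<lambda>y. S a y) has_real_derivative Q a p) (at p)"
proof -
  define S where "S x y = integral {a0..x} (\<lambda>t. P t p0) + integral {p0..y} (Q x)" for x y
  note P_slice = continuous_on_slices(1)[OF cont(1), unfolded case_prod_conv]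
  note Q_slice = continuous_on_slices(2)[OF cont(2), unfolded case_prod_conv]
  have "((\<lambda>x. S x p) has_real_derivative P a p) (at a) \<and> ((\<lambda>y. S a y) has_real_derivative Q a p) (at p)"
    if "(a, p) \<in> box (a0, p0) (a1, p1)" for a p
  proof
    from that have a: "a0 < a" "a < a1" and p: "p0 < p" "p < p1"
      by (simp_all add: box_prod)
    have "((\<lambda>x. integral (cbox p0 p) (Q x)) has_real_derivative integral (cbox p0 p) (Q' a))
            (at a within {a0<..<a1})"
    proof (rule leibniz_rule_field_derivative)
      show "((\<lambda>x. Q x t) has_real_derivative Q' x t) (at x within {a0<..<a1})"
        if "x \<in> {a0<..<a1}" "t \<in> cbox p0 p" for x t
        using that p by (intro has_field_derivative_at_within[OF Q_deriv]) simp
      show "Q x integrable_on cbox p0 p" if "x \<in> {a0<..<a1}" for x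
        using that p continuous_on_subset[OF Q_slice, of x "{p0..p}"]
        by (simp add: integrable_continuous_real)
      show "continuous_on ({a0<..<a1} \<times> cbox p0 p) (\<lambda>(x, y). Q' x y)"
        using p by (intro continuous_on_subset[OF cont(3)]) (auto simp: cbox_Pair_eq)
      show "a \<in> {a0<..<a1}" using a by simp
      show "convex {a0<..<a1}" by (rule convex_real_interval)
    qed
    moreover have "at a within {a0<..<a1} = at a"
      using a by (intro at_within_open) auto
    ultimately have dG: "((\<lambda>x. integral {p0..p} (Q x)) has_real_derivative integral {p0..p} (Q' a)) (at a)"
      unfolding box_real by simp
    have "integral {p0..p} (Q' a) = P a p - P a p0"
    proof (rule integral_unique, rule fundamental_theorem_of_calculus)
      show "p0 \<le> p" using p by simp
      show "(P a has_vector_derivative Q' a y) (at y within {p0..p})" if "y \<in> {p0..p}" for y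
      proof -
        have "(a, y) \<in> cbox (a0, p0) (a1, p1)" using that a p by simp
        then show ?thesis
          unfolding has_real_derivative_iff_has_vector_derivative[symmetric]
          by (rule has_field_derivative_at_within[OF P_deriv])
      qed
    qed
    moreover have dF: "((\<lambda>x. integral {a0..x} (\<lambda>t. P t p0)) has_real_derivative P a p0) (at a)"
      using a p by (intro has_real_derivative_integral_upper[where b = a1] P_slice) auto
    ultimately show "((\<lambda>x. S x p) has_real_derivative P a p) (at a)"
      unfolding S_def using DERIV_add[OF dF dG] by simp
    have "((\<lambda>y. integral {p0..y} (Q a)) has_real_derivative Q a p) (at p)"
      using a p by (intro has_real_derivative_integral_upper[where b = p1] Q_slice) auto
    then show "((\<lambda>y. S a y) has_real_derivative Q a p) (at p)"
      unfolding S_def using DERIV_add[OF DERIV_const] by simp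
  qed
  then show ?thesis by (rule that)
qed

definition phipow_deriv :: "nat \<Rightarrow> real \<Rightarrow> real" where
  "phipow_deriv d y = 2 * ((real d + 1) / (real d - 1)) * y * (y\<^sup>2) powr (2 / (real d - 1))"

lemma phipow_has_real_derivative:
  assumes "d \<ge> 2"
  shows "(phipow d has_real_derivative phipow_deriv d y) (at y)"
proof -
  have "(real d + 1) / (real d - 1) > 1" "(real d + 1) / (real d - 1) - 1 = 2 / (real d - 1)"
    using assms by (auto simp: field_simps)
  then show ?thesis
    unfolding phipow_def[abs_def] phipow_deriv_def using has_real_derivative_sq_powr by metis
qed

lemma phipow_Euler:
  assumes "d \<ge> 2"
  shows "y * phipow_deriv d y = 2 * ((real d + 1) / (real d - 1)) * phipow d y"
proof -
  have "(real d + 1) / (real d - 1) - 1 = 2 / (real d - 1)"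
    using assms by (auto simp: field_simps)
  then show ?thesis
    unfolding phipow_def phipow_deriv_def using sq_times_sq_powr[of y "(real d + 1) / (real d - 1)"]
    by (simp add: power2_eq_square mult_ac)
qed

lemma continuous_on_phipow [continuous_intros]:
  "d \<ge> 2 \<Longrightarrow> continuous_on S f \<Longrightarrow> continuous_on S (\<lambda>x. phipow d (f x))"
  using continuous_on_compose2[of UNIV "phipow d" S f]
  by (meson DERIV_isCont continuous_at_imp_continuous_on phipow_has_real_derivative subset_UNIV)

definition rad_phi_dA :: "nat \<Rightarrow> real \<Rightarrow> real \<Rightarrow> real \<Rightarrow> real \<Rightarrow> real \<Rightarrow> real \<Rightarrow> real" where
  "rad_phi_dA d \<kappa> l k \<mu> A \<phi> =
     - (real d + 1) * (real d * (real d - 1) / (\<kappa>\<^sup>2 * l\<^sup>2)) * \<mu> * exp (- (real d + 1) * A)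
     - 2 * k * ((real d - 1) / (2 * l))\<^sup>2 * \<phi>\<^sup>2 * exp (- 2 * A)"

definition rad_phi_dphi :: "nat \<Rightarrow> real \<Rightarrow> real \<Rightarrow> real \<Rightarrow> real \<Rightarrow> real \<Rightarrow> real" where
  "rad_phi_dphi d l lam k A \<phi> =
     2 * k * ((real d - 1) / (2 * l))\<^sup>2 * \<phi> * exp (- 2 * A)
     + lam * phipow_deriv d \<phi>"

lemma rad_phi_has_derivative_A:
  "((\<lambda>a. rad_phi d \<kappa> l lam k \<mu> a \<phi>) has_real_derivative rad_phi_dA d \<kappa> l k \<mu> A \<phi>) (at A)"
proof -
  \<comment> \<open>with the coefficients abstracted, the quotient rule does not ask for \<open>\<kappa> \<noteq> 0\<close>, \<open>l \<noteq> 0\<close>\<close>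
  define c\<^sub>\<mu> where "c\<^sub>\<mu> = real d * (real d - 1) / (\<kappa>\<^sup>2 * l\<^sup>2) * \<mu>"
  define c\<^sub>k where "c\<^sub>k = k * ((real d - 1) / (2 * l))\<^sup>2 * \<phi>\<^sup>2"
  have "(\<lambda>a. rad_phi d \<kappa> l lam k \<mu> a \<phi>)
        = (\<lambda>a. c\<^sub>\<mu> * exp (- (real d + 1) * a) + c\<^sub>k * exp (- 2 * a) + lam * phipow d \<phi>)"
    by (simp add: rad_phi_def c\<^sub>\<mu>_def c\<^sub>k_def)
  then show ?thesis
    by (auto intro!: derivative_eq_intros) (simp add: rad_phi_dA_def c\<^sub>\<mu>_def c\<^sub>k_def)
qed

lemma rad_phi_has_derivative_phi:
  "d \<ge> 2 \<Longrightarrow>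
   ((\<lambda>p. rad_phi d \<kappa> l lam k \<mu> A p) has_real_derivative rad_phi_dphi d l lam k A \<phi>) (at \<phi>)"
  unfolding rad_phi_def rad_phi_dphi_def
  by (auto intro!: derivative_eq_intros phipow_has_real_derivative)

lemma rad_phi_Euler:
  assumes "d \<ge> 2" "l \<noteq> 0"
  shows "(real d - 1) / 2 * \<phi> * rad_phi_dphi d l lam k A \<phi> - rad_phi_dA d \<kappa> l k \<mu> A \<phi>
         = (real d + 1) * rad_phi d \<kappa> l lam k \<mu> A \<phi>"
proof -
  have "real d - 1 > 0" using assms(1) by simp
  have "(real d - 1) / 2 * \<phi> * rad_phi_dphi d l lam k A \<phi>
        = (real d - 1) * k * ((real d - 1) / (2 * l))\<^sup>2 * \<phi>\<^sup>2 * exp (- 2 * A)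
          + (real d - 1) / 2 * lam * (\<phi> * phipow_deriv d \<phi>)"
    unfolding rad_phi_dphi_def using assms(2) \<open>real d - 1 > 0\<close> by (simp add: field_simps power2_eq_square)
  also have "\<dots> = (real d - 1) * k * ((real d - 1) / (2 * l))\<^sup>2 * \<phi>\<^sup>2 * exp (- 2 * A)
          + (real d + 1) * lam * phipow d \<phi>"
    unfolding phipow_Euler[OF assms(1)] using assms(1) by (simp add: field_simps)
  finally show ?thesis
    unfolding rad_phi_def rad_phi_dA_def by (simp add: algebra_simps flip: add_divide_distrib)
qed

definition pi_phi_dA :: "real \<Rightarrow> nat \<Rightarrow> real \<Rightarrow> real \<Rightarrow> real \<Rightarrow> real \<Rightarrow> real \<Rightarrow> real \<Rightarrow> real \<Rightarrow> real" where
  "pi_phi_dA s d \<kappa> l lam k \<mu> A \<phi> =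
     s * exp (real d * A) * (real d * sqrt (rad_phi d \<kappa> l lam k \<mu> A \<phi>)
       + rad_phi_dA d \<kappa> l k \<mu> A \<phi> / (2 * sqrt (rad_phi d \<kappa> l lam k \<mu> A \<phi>)))"

lemma pi_mixed_partials:
  assumes "d \<ge> 2" "l \<noteq> 0" "rad_phi d \<kappa> l lam k \<mu> A \<phi> > 0"
  shows "((\<lambda>a. pi_phi s d \<kappa> l lam k \<mu> a \<phi>) has_real_derivative pi_phi_dA s d \<kappa> l lam k \<mu> A \<phi>) (at A)"
    and "((\<lambda>p. pi_A s d \<kappa> l lam k \<mu> A p) has_real_derivative pi_phi_dA s d \<kappa> l lam k \<mu> A \<phi>) (at \<phi>)"
proof -
  note Euler_pair = Euler_eigenfunction_mixed_partials[where R = "rad_phi d \<kappa> l lam k \<mu>" and n = "real d" and c = s,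
      OF rad_phi_has_derivative_A rad_phi_has_derivative_phi[OF assms(1)] assms(3)
      rad_phi_Euler[OF assms(1,2)]]
  show "((\<lambda>a. pi_phi s d \<kappa> l lam k \<mu> a \<phi>) has_real_derivative pi_phi_dA s d \<kappa> l lam k \<mu> A \<phi>) (at A)"
    using Euler_pair(1) unfolding pi_phi_def pi_phi_dA_def .
  show "((\<lambda>p. pi_A s d \<kappa> l lam k \<mu> A p) has_real_derivative pi_phi_dA s d \<kappa> l lam k \<mu> A \<phi>) (at \<phi>)"
    using Euler_pair(2)[where h = "- (real d * (real d - 1) / (\<kappa>\<^sup>2 * l)) * exp (real d * A) * sqrt (rad_A d k \<mu> A)"]
    unfolding pi_A_def pi_phi_def pi_phi_dA_def .
qed

lemma Ham_pi_eq_0: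
  assumes "d \<ge> 2" "\<kappa> \<noteq> 0" "l \<noteq> 0" "s \<in> {-1, 1}"
    and "rad_phi d \<kappa> l lam k \<mu> A \<phi> \<ge> 0" "rad_A d k \<mu> A \<ge> 0"
  shows "Ham d \<kappa> l lam k A \<phi> (pi_A s d \<kappa> l lam k \<mu> A \<phi>) (pi_phi s d \<kappa> l lam k \<mu> A \<phi>) = 0"
proof -
  define E where "E = exp (real d * A)"
  have "E > 0" by (simp add: E_def)
  have "s\<^sup>2 = 1" using assms(4) by auto
  then have pi_phi_sq: "(pi_phi s d \<kappa> l lam k \<mu> A \<phi>)\<^sup>2 = E\<^sup>2 * rad_phi d \<kappa> l lam k \<mu> A \<phi>"
    using assms(5) by (simp add: pi_phi_def E_def power_mult_distrib)
  have pi_A_sq: "(pi_A s d \<kappa> l lam k \<mu> A \<phi> - (real d - 1) / 2 * \<phi> * pi_phi s d \<kappa> l lam k \<mu> A \<phi>)\<^sup>2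
      = (real d * (real d - 1) / (\<kappa>\<^sup>2 * l))\<^sup>2 * E\<^sup>2 * rad_A d k \<mu> A"
    using assms(6) by (simp add: pi_A_def E_def power_mult_distrib power_divide)
  have inv_E: "exp (- real d * A) = 1 / E"
    by (simp add: E_def exp_minus field_simps)
  have "Ham d \<kappa> l lam k A \<phi> (pi_A s d \<kappa> l lam k \<mu> A \<phi>) (pi_phi s d \<kappa> l lam k \<mu> A \<phi>)
    = E / 2 * (rad_phi d \<kappa> l lam k \<mu> A \<phi>
        - \<kappa>\<^sup>2 / (real d * (real d - 1)) * (real d * (real d - 1) / (\<kappa>\<^sup>2 * l))\<^sup>2 * rad_A d k \<mu> A
        + real d * (real d - 1) / (\<kappa>\<^sup>2 * l\<^sup>2) - lam * phipow d \<phi>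
        + real d * (real d - 1) * k / (\<kappa>\<^sup>2 * l\<^sup>2) * exp (- 2 * A)
          * (1 - (real d - 1) * \<kappa>\<^sup>2 / (4 * real d) * \<phi>\<^sup>2))"
    unfolding Ham_def pi_phi_sq pi_A_sq inv_E E_def[symmetric] using \<open>E > 0\<close>
    by (simp add: field_simps power2_eq_square)
  also have "\<dots> = 0"
    using assms(1-3) unfolding rad_phi_def rad_A_def
    by (simp add: field_simps power2_eq_square flip: exp_add)
  finally show ?thesis .
qed

lemma continuous_on_rad_phi:
  "d \<ge> 2 \<Longrightarrow> continuous_on S (\<lambda>(a, p). rad_phi d \<kappa> l lam k \<mu> a p)"
  unfolding rad_phi_def case_prod_beta by (intro continuous_intros)

lemma continuous_on_rad_A: "continuous_on S (\<lambda>(a, p). rad_A d k \<mu> a)"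
  unfolding rad_A_def case_prod_beta by (intro continuous_intros)

lemma open_dom_HJ:
  assumes "d \<ge> 2"
  shows "open (dom_HJ d \<kappa> l lam k \<mu>)"
proof -
  have "dom_HJ d \<kappa> l lam k \<mu>
        = {z. 0 < (\<lambda>(a, p). rad_phi d \<kappa> l lam k \<mu> a p) z} \<inter> {z. 0 < (\<lambda>(a, p). rad_A d k \<mu> a) z}"
    by (auto simp: dom_HJ_def)
  then show ?thesis
    by (simp only:) (intro open_Int open_Collect_less continuous_on_const
        continuous_on_rad_phi[OF assms] continuous_on_rad_A)
qed

lemma continuous_on_pi_phi:
  "d \<ge> 2 \<Longrightarrow> continuous_on S (\<lambda>(a, p). pi_phi s d \<kappa> l lam k \<mu> a p)"
  unfolding pi_phi_def case_prod_beta
  by (intro continuous_intros continuous_on_rad_phi[unfolded case_prod_beta])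

lemma continuous_on_pi_A:
  "d \<ge> 2 \<Longrightarrow> continuous_on S (\<lambda>(a, p). pi_A s d \<kappa> l lam k \<mu> a p)"
  unfolding pi_A_def case_prod_beta
  by (intro continuous_intros continuous_on_pi_phi[unfolded case_prod_beta]
      continuous_on_rad_A[unfolded case_prod_beta])

lemma continuous_on_pi_phi_dA:
  "d \<ge> 2 \<Longrightarrow> continuous_on (dom_HJ d \<kappa> l lam k \<mu>) (\<lambda>(a, p). pi_phi_dA s d \<kappa> l lam k \<mu> a p)"
  unfolding pi_phi_dA_def rad_phi_dA_def case_prod_beta
  by (intro continuous_intros continuous_on_rad_phi[unfolded case_prod_beta])
    (auto simp: dom_HJ_def)

lemma pi_has_local_potential:
  assumes "d \<ge> 2" "l \<noteq> 0" "(A, \<phi>) \<in> dom_HJ d \<kappa> l lam k \<mu>"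
  obtains e S where "e > 0" "ball (A, \<phi>) e \<subseteq> dom_HJ d \<kappa> l lam k \<mu>"
    "\<And>a p. (a, p) \<in> ball (A, \<phi>) e \<Longrightarrow>
       ((\<lambda>x. S x p) has_real_derivative pi_A s d \<kappa> l lam k \<mu> a p) (at a)
       \<and> ((\<lambda>y. S a y) has_real_derivative pi_phi s d \<kappa> l lam k \<mu> a p) (at p)"
proof -
  let ?D = "dom_HJ d \<kappa> l lam k \<mu>"
  obtain a0 p0 a1 p1 where box: "cbox (a0, p0) (a1, p1) \<subseteq> ?D" "(A, \<phi>) \<in> box (a0, p0) (a1, p1)"
    using open_contains_cbox[OF open_dom_HJ[OF assms(1)] assms(3)] by (metis prod.collapse)
  obtain e where e: "e > 0" "ball (A, \<phi>) e \<subseteq> box (a0, p0) (a1, p1)"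
    using open_contains_ball open_box box(2) by metis
  have rad: "rad_phi d \<kappa> l lam k \<mu> a p > 0" if "(a, p) \<in> cbox (a0, p0) (a1, p1)" for a p
    using box(1) that by (force simp: dom_HJ_def)
  have partials: "((\<lambda>x. pi_phi s d \<kappa> l lam k \<mu> x p) has_real_derivative pi_phi_dA s d \<kappa> l lam k \<mu> a p) (at a)"
      "((\<lambda>y. pi_A s d \<kappa> l lam k \<mu> a y) has_real_derivative pi_phi_dA s d \<kappa> l lam k \<mu> a p) (at p)"
    if "(a, p) \<in> cbox (a0, p0) (a1, p1)" for a p
    using pi_mixed_partials[OF assms(1,2) rad[OF that]] by simp_all
  obtain S where "\<And>a p. (a, p) \<in> box (a0, p0) (a1, p1) \<Longrightarrow>
       ((\<lambda>x. S x p) has_real_derivative pi_A s d \<kappa> l lam k \<mu> a p) (at a)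
       \<and> ((\<lambda>y. S a y) has_real_derivative pi_phi s d \<kappa> l lam k \<mu> a p) (at p)"
    using Poincare_lemma_box[OF continuous_on_pi_A[OF assms(1)]
          continuous_on_pi_phi[OF assms(1)]
          continuous_on_subset[OF continuous_on_pi_phi_dA[OF assms(1)] box(1)] partials]
    by blast
  moreover have "ball (A, \<phi>) e \<subseteq> ?D"
    using e(2) box(1) box_subset_cbox by blast
  ultimately show ?thesis
    using that e by blast
qed

lemma pi_phi_has_derivative_mu:
  assumes "d \<ge> 2" "\<kappa> \<noteq> 0" "l \<noteq> 0" "s \<noteq> 0" "rad_phi d \<kappa> l lam k \<mu> A \<phi> > 0"
  shows "\<exists>D. D \<noteq> 0 \<and> ((\<lambda>m. pi_phi s d \<kappa> l lam k m A \<phi>) has_real_derivative D) (at \<mu>)"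
proof -
  define c where "c = real d * (real d - 1) / (\<kappa>\<^sup>2 * l\<^sup>2) * exp (- (real d + 1) * A)"
  have "c \<noteq> 0" using assms(1-3) by (simp add: c_def)
  have "((\<lambda>m. rad_phi d \<kappa> l lam k m A \<phi>) has_real_derivative c) (at \<mu>)"
    unfolding rad_phi_def c_def using assms(2,3) by (auto intro!: derivative_eq_intros)
  then have "((\<lambda>m. pi_phi s d \<kappa> l lam k m A \<phi>) has_real_derivative
      s * exp (real d * A) * (c / (2 * sqrt (rad_phi d \<kappa> l lam k \<mu> A \<phi>)))) (at \<mu>)"
    unfolding pi_phi_def using assms(5) by (auto intro!: derivative_eq_intros) (simp add: field_simps)
  moreover have "s * exp (real d * A) * (c / (2 * sqrt (rad_phi d \<kappa> l lam k \<mu> A \<phi>))) \<noteq> 0"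
    using assms(4,5) \<open>c \<noteq> 0\<close> by simp
  ultimately show ?thesis by blast
qed

theorem mainTheorem9:
  fixes d :: nat and \<kappa> l lam k \<mu> s :: real
  assumes "d \<ge> 2" and "\<kappa> > 0" and "l > 0"
    and "k \<in> {-1, 0, 1}" and "s \<in> {-1, 1}"
  shows
    "open (dom_HJ d \<kappa> l lam k \<mu>)
     \<and> (\<forall>A \<phi>. (A, \<phi>) \<in> dom_HJ d \<kappa> l lam k \<mu> \<longrightarrow>
          Ham d \<kappa> l lam k A \<phi> (pi_A s d \<kappa> l lam k \<mu> A \<phi>) (pi_phi s d \<kappa> l lam k \<mu> A \<phi>) = 0)
     \<and> (\<forall>A \<phi>. (A, \<phi>) \<in> dom_HJ d \<kappa> l lam k \<mu> \<longrightarrow>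
          (\<exists>D. ((\<lambda>p. pi_A s d \<kappa> l lam k \<mu> A p) has_real_derivative D) (at \<phi>)
             \<and> ((\<lambda>a. pi_phi s d \<kappa> l lam k \<mu> a \<phi>) has_real_derivative D) (at A)))
     \<and> (\<forall>A \<phi>. (A, \<phi>) \<in> dom_HJ d \<kappa> l lam k \<mu> \<longrightarrow>
          (\<exists>e > 0. \<exists>S :: real \<Rightarrow> real \<Rightarrow> real.
             ball (A, \<phi>) e \<subseteq> dom_HJ d \<kappa> l lam k \<mu>
             \<and> (\<forall>a p. (a, p) \<in> ball (A, \<phi>) e \<longrightarrow>
                  ((\<lambda>x. S x p) has_real_derivative pi_A s d \<kappa> l lam k \<mu> a p) (at a)
                \<and> ((\<lambda>y. S a y) has_real_derivative pi_phi s d \<kappa> l lam k \<mu> a p) (at p)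
                \<and> Ham d \<kappa> l lam k a p (pi_A s d \<kappa> l lam k \<mu> a p) (pi_phi s d \<kappa> l lam k \<mu> a p) = 0)
             \<and> (\<exists>D. D \<noteq> 0 \<and> ((\<lambda>m. pi_phi s d \<kappa> l lam k m A \<phi>) has_real_derivative D) (at \<mu>))))"
proof (intro conjI allI impI)
  have d: "d \<ge> 2" and \<kappa>: "\<kappa> \<noteq> 0" and l: "l \<noteq> 0" and s: "s \<noteq> 0"
    using assms by auto
  let ?D = "dom_HJ d \<kappa> l lam k \<mu>"
  show "open ?D" by (rule open_dom_HJ[OF d])
  show Ham: "Ham d \<kappa> l lam k a p (pi_A s d \<kappa> l lam k \<mu> a p) (pi_phi s d \<kappa> l lam k \<mu> a p) = 0"
    if "(a, p) \<in> ?D" for a p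
    using that Ham_pi_eq_0[OF d \<kappa> l assms(5)] by (simp add: dom_HJ_def)
  fix A \<phi> assume "(A, \<phi>) \<in> ?D"
  then have rad: "rad_phi d \<kappa> l lam k \<mu> A \<phi> > 0" by (simp add: dom_HJ_def)
  show "\<exists>D. ((\<lambda>p. pi_A s d \<kappa> l lam k \<mu> A p) has_real_derivative D) (at \<phi>)
           \<and> ((\<lambda>a. pi_phi s d \<kappa> l lam k \<mu> a \<phi>) has_real_derivative D) (at A)"
    using pi_mixed_partials[OF d l rad] by blast
  obtain e S where "e > 0" "ball (A, \<phi>) e \<subseteq> ?D"
    "\<And>a p. (a, p) \<in> ball (A, \<phi>) e \<Longrightarrow>
       ((\<lambda>x. S x p) has_real_derivative pi_A s d \<kappa> l lam k \<mu> a p) (at a)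
       \<and> ((\<lambda>y. S a y) has_real_derivative pi_phi s d \<kappa> l lam k \<mu> a p) (at p)"
    using pi_has_local_potential[OF d l \<open>(A, \<phi>) \<in> ?D\<close>] by blast
  with Ham pi_phi_has_derivative_mu[OF d \<kappa> l s rad]
  show "\<exists>e > 0. \<exists>S :: real \<Rightarrow> real \<Rightarrow> real.
             ball (A, \<phi>) e \<subseteq> ?D
             \<and> (\<forall>a p. (a, p) \<in> ball (A, \<phi>) e \<longrightarrow>
                  ((\<lambda>x. S x p) has_real_derivative pi_A s d \<kappa> l lam k \<mu> a p) (at a)
                \<and> ((\<lambda>y. S a y) has_real_derivative pi_phi s d \<kappa> l lam k \<mu> a p) (at p)
                \<and> Ham d \<kappa> l lam k a p (pi_A s d \<kappa> l lam k \<mu> a p) (pi_phi s d \<kappa> l lam k \<mu> a p) = 0)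
             \<and> (\<exists>D. D \<noteq> 0 \<and> ((\<lambda>m. pi_phi s d \<kappa> l lam k m A \<phi>) has_real_derivative D) (at \<mu>))"
    by blast
qed

end
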